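(* Let $a>0$ and let $\phi$ be a random variable on $[0,2\pi]$ with density $f_\Phi(\phi)=\frac{\exp(-a\cos\phi)}{2\pi I_0(a)}$. Then $$\mathbb{E}\!\left[\exp(a e^{i\phi})\right]=\frac{J_0(a)}{I_0(a)},\qquad \mathbb{E}\!\left[\left|\exp(a e^{i\phi})\right|^2\right]=1.$$ In particular, if $a$ is a positive zero of $J_0$, then $\mathbb{E}[\exp(a e^{i\phi})]=0$ and $\mathbb{E}[|\exp(a e^{i\phi})|^2]=1$.
   Context: $J_0$ is the Bessel function of the first kind of order $0$ and $I_0$ is the modified Bessel function of the first kind of order $0$. *)

theory Defs
  imports "HOL-Probability.Probability"
begin

definition bessel_J0 :: "real \<Rightarrow> real" where
  "bessel_J0 x = (\<Sum>k. (-1) ^ k * (x / 2) ^ (2 * k) / (fact k) ^ 2)"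

definition bessel_I0 :: "real \<Rightarrow> real" where
  "bessel_I0 x = (\<Sum>k. (x / 2) ^ (2 * k) / (fact k) ^ 2)"

end

theory Submission
  imports Defs
begin

(*
  Differentiating cos^(n+1) x * sin x gives the Wallis recurrence, so cos^n and sin^n have the
  same integral over [0, 2 pi]: 2 pi (2k)! / (4^k (k!)^2) for n = 2k, and 0 for odd n.
  Integrating the exponential series term by term then gives
  int_0^(2 pi) exp (z c(x)) dx = 2 pi * sum_k (z/2)^(2k) / (k!)^2  for c = cos and c = sin,
  which is 2 pi I_0(a) at z = a and 2 pi J_0(a) at z = i a.
  As exp (a e^(i phi)) = e^(a cos phi) e^(i a sin phi), the factor e^(a cos phi) cancels the
  density and leaves (2 pi I_0(a))^-1 int e^(i a sin phi) dphi = J_0(a) / I_0(a); likewise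
  |exp (a e^(i phi))|^2 = e^(2 a cos phi) leaves (2 pi I_0(a))^-1 int e^(a cos phi) dphi = 1.
*)

lemma has_real_derivative_power_mult_rotation:
  fixes c s :: "real \<Rightarrow> real"
  assumes c: "(c has_real_derivative - s x) (at x)" and s: "(s has_real_derivative c x) (at x)"
    and unit: "c x ^ 2 + s x ^ 2 = 1"
  shows "((\<lambda>x. c x ^ (n+1) * s x) has_real_derivative
           real (n+2) * c x ^ (n+2) - real (n+1) * c x ^ n) (at x)"
proof -
  have pythagoras: "m * p * (- s x) * s x + c x * p * c x = (m + 1) * (c x * c x * p) - m * p"
    for m p :: real
    using unit unfolding power2_eq_square by algebra
  have "((\<lambda>x. c x ^ (n+1) * s x) has_real_derivative
          real (n+1) * c x ^ n * (- s x) * s x + c x * c x ^ n * c x) (at x)"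
    using DERIV_mult[OF DERIV_power_Suc[OF c, where n=n] s] by (simp add: algebra_simps)
  moreover have "real (n+1) * c x ^ n * (- s x) * s x + c x * c x ^ n * c x
          = real (n+2) * c x ^ (n+2) - real (n+1) * c x ^ n"
    by (subst pythagoras) (simp add: algebra_simps)
  ultimately show ?thesis by simp
qed

definition trig_moment :: "nat \<Rightarrow> real" where
  "trig_moment n = (if even n then 2*pi * fact n / (4 ^ (n div 2) * fact (n div 2) ^ 2) else 0)"

lemma trig_moment_rec: "real (n+2) * trig_moment (n+2) = real (n+1) * trig_moment n"
proof (cases "even n")
  case True
  then obtain k where n: "n = 2*k" by blast
  have ratio: "(2*r+2) * (2*pi * ((2*r+2) * (2*r+1) * A) / (4*P * ((r+1) * B)^2))
                 = (2*r+1) * (2*pi * A / (P * B^2))" if "B > 0" "P > 0" "r \<ge> 0" for A P B r :: real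
  proof -
    have "4*P * ((r+1) * B)^2 \<noteq> 0" using that by simp
    then show ?thesis
      using that by (simp add: field_simps) (simp add: power2_eq_square algebra_simps)
  qed
  have "fact (2*k+2) = real (2*k+2) * real (2*k+1) * (fact (2*k) :: real)"
    by (simp add: algebra_simps)
  moreover have "fact (k+1) = real (k+1) * (fact k :: real)" by simp
  ultimately have "trig_moment (n+2)
      = 2*pi * (real (2*k+2) * real (2*k+1) * fact (2*k)) / (4 * 4^k * (real (k+1) * fact k) ^ 2)"
    by (simp add: trig_moment_def n)
  moreover have "trig_moment n = 2*pi * fact (2*k) / (4^k * fact k ^ 2)"
    by (simp add: trig_moment_def n)
  ultimately show ?thesis
    using ratio[of "fact k" "4^k" "real k" "fact (2*k)"] by (simp add: n ac_simps)
next
  case False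
  then show ?thesis by (simp add: trig_moment_def)
qed

lemma has_integral_derivative_eq_zero:
  assumes "\<And>x. (F has_real_derivative f x) (at x)" and "F b = F a" and "a \<le> b"
  shows "(f has_integral 0) {a..b}"
proof -
  have "(f has_integral F b - F a) {a..b}"
    using assms by (intro fundamental_theorem_of_calculus)
      (auto simp flip: has_real_derivative_iff_has_vector_derivative intro: has_field_derivative_at_within)
  with assms show ?thesis by simp
qed

lemma has_integral_power_trig_moment:
  fixes c s :: "real \<Rightarrow> real"
  assumes c: "\<And>x. (c has_real_derivative - s x) (at x)"
    and s: "\<And>x. (s has_real_derivative c x) (at x)"
    and unit: "\<And>x. c x ^ 2 + s x ^ 2 = 1"
    and periodic: "c (2*pi) = c 0" "s (2*pi) = s 0"
  shows "((\<lambda>x. c x ^ n) has_integral trig_moment n) {0..2*pi}"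
proof -
  have cont: "continuous_on {0..2*pi} (\<lambda>x. c x ^ n)" for n
    using c by (intro continuous_intros continuous_at_imp_continuous_on) (blast intro: DERIV_isCont)
  have recurrence: "((\<lambda>x. real (n+2) * c x ^ (n+2) - real (n+1) * c x ^ n) has_integral 0) {0..2*pi}" for n
    using has_real_derivative_power_mult_rotation[OF c s unit] periodic
    by (intro has_integral_derivative_eq_zero[where F = "\<lambda>x. c x ^ (n+1) * s x"]) auto
  have "((\<lambda>x. c x ^ n) has_integral trig_moment n) {0..2*pi}
      \<and> ((\<lambda>x. c x ^ Suc n) has_integral trig_moment (Suc n)) {0..2*pi}"
  proof (induction n)
    case 0
    have "(c has_integral 0) {0..2*pi}"
      using s periodic by (intro has_integral_derivative_eq_zero[where F = s]) auto
    then show ?case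
      using has_integral_const_real[of "1::real" 0 "2*pi"] by (simp add: trig_moment_def)
  next
    case (Suc n)
    define I where "I = integral {0..2*pi} (\<lambda>x. c x ^ (n+2))"
    have I: "((\<lambda>x. c x ^ (n+2)) has_integral I) {0..2*pi}"
      unfolding I_def using cont by (intro integrable_integral integrable_continuous_real)
    have "((\<lambda>x. real (n+2) * c x ^ (n+2) - real (n+1) * c x ^ n) has_integral
            real (n+2) * I - real (n+1) * trig_moment n) {0..2*pi}"
      using Suc.IH I by (intro has_integral_diff has_integral_mult_right) auto
    with recurrence[of n] have "real (n+2) * I = real (n+1) * trig_moment n"
      by (auto dest: has_integral_unique)
    with trig_moment_rec[of n] have "I = trig_moment (n+2)"
      by (metis mult_cancel_left of_nat_eq_0_iff add_2_eq_Suc' nat.simps(3))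
    then show ?case using Suc.IH I by simp
  qed
  then show ?thesis ..
qed

lemma has_integral_cos_power: "((\<lambda>x. cos x ^ n) has_integral trig_moment n) {0..2*pi}"
  by (rule has_integral_power_trig_moment[OF DERIV_cos DERIV_sin]) simp_all

lemma has_integral_sin_power: "((\<lambda>x. sin x ^ n) has_integral trig_moment n) {0..2*pi}"
proof (rule has_integral_power_trig_moment)
  show "(sin has_real_derivative - (- cos x)) (at x)" for x
    using DERIV_sin by simp
  show "((\<lambda>x. - cos x) has_real_derivative sin x) (at x)" for x
    using DERIV_minus[OF DERIV_cos] by simp
qed simp_all

lemma sums_integral_exp_moments:
  fixes z :: "'a::{real_normed_field,banach}" and c :: "real \<Rightarrow> real" and m :: "nat \<Rightarrow> real"
  assumes cont: "continuous_on {l..u} c" and bounded: "\<And>x. x \<in> {l..u} \<Longrightarrow> \<bar>c x\<bar> \<le> 1"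
    and moments: "\<And>n. ((\<lambda>x. c x ^ n) has_integral m n) {l..u}"
  shows "(\<lambda>n. z ^ n /\<^sub>R fact n * of_real (m n)) sums integral {l..u} (\<lambda>x. exp (z * of_real (c x)))"
proof -
  define f where "f n x = z ^ n /\<^sub>R fact n * of_real (c x ^ n)" for n x
  have uniform: "uniform_limit {l..u} (\<lambda>n x. \<Sum>i<n. f i x) (\<lambda>x. \<Sum>i. f i x) sequentially"
    (is "uniform_limit _ _ ?F _")
  proof (rule Weierstrass_m_test)
    show "norm (f n x) \<le> norm z ^ n / fact n" if "x \<in> {l..u}" for n x
    proof -
      have "norm (f n x) = norm z ^ n / fact n * \<bar>c x\<bar> ^ n"
        by (simp add: f_def norm_mult norm_power power_abs divide_inverse mult.commute)
      also have "\<dots> \<le> norm z ^ n / fact n * 1"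
        using bounded[OF that] by (intro mult_left_mono power_le_one) auto
      finally show ?thesis by simp
    qed
    show "summable (\<lambda>n. norm z ^ n / fact n)"
      using summable_exp_generic[of "norm z"] by (simp add: divide_inverse mult.commute)
  qed
  have sum_eq_exp: "?F = (\<lambda>x. exp (z * of_real (c x)))"
  proof
    fix x
    have "(\<lambda>i. f i x) = (\<lambda>i. (z * of_real (c x)) ^ i /\<^sub>R fact i)"
      by (simp add: f_def power_mult_distrib)
    then show "?F x = exp (z * of_real (c x))"
      by (simp add: exp_def)
  qed
  have "continuous_on {l..u} (\<lambda>x. \<Sum>i<n. f i x)" for n
    unfolding f_def by (intro continuous_intros cont)
  from uniform_limit_integral[OF uniform[unfolded sum_eq_exp] this] obtain I J where
      I: "\<And>n. ((\<lambda>x. \<Sum>i<n. f i x) has_integral I n) {l..u}"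
    and J: "((\<lambda>x. exp (z * of_real (c x))) has_integral J) {l..u}"
    and lim: "I \<longlonglongrightarrow> J"
    by auto
  have partial_sums: "((\<lambda>x. \<Sum>i<n. f i x) has_integral (\<Sum>i<n. z ^ i /\<^sub>R fact i * of_real (m i))) {l..u}" for n
    unfolding f_def by (intro has_integral_sum has_integral_mult_right has_integral_of_real moments) auto
  have "I = (\<lambda>n. \<Sum>i<n. z ^ i /\<^sub>R fact i * of_real (m i))"
    using I partial_sums has_integral_unique by blast
  with lim J show ?thesis
    unfolding sums_def by (simp add: integral_unique)
qed

lemma sums_integral_exp_trig:
  fixes z :: "'a::{real_normed_field,banach}" and c :: "real \<Rightarrow> real"
  assumes "continuous_on {0..2*pi} c" and "\<And>x. x \<in> {0..2*pi} \<Longrightarrow> \<bar>c x\<bar> \<le> 1"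
    and "\<And>n. ((\<lambda>x. c x ^ n) has_integral trig_moment n) {0..2*pi}"
  shows "(\<lambda>k. of_real (2*pi) * (z/2) ^ (2*k) / fact k ^ 2)
           sums integral {0..2*pi} (\<lambda>x. exp (z * of_real (c x)))"
proof -
  let ?t = "\<lambda>n. z ^ n /\<^sub>R fact n * of_real (trig_moment n)"
  have "(\<lambda>k. ?t (2*k)) sums integral {0..2*pi} (\<lambda>x. exp (z * of_real (c x)))"
  proof (subst sums_mono_reindex)
    show "strict_mono (\<lambda>k::nat. 2*k)" by (auto simp: strict_mono_def)
    show "?t n = 0" if "n \<notin> range (\<lambda>k::nat. 2*k)" for n
      using that by (metis evenE rangeI trig_moment_def mult_zero_right of_real_0)
  qed (rule sums_integral_exp_moments[OF assms])
  moreover have "?t (2*k) = of_real (2*pi) * (z/2) ^ (2*k) / fact k ^ 2" for k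
  proof -
    have "?t (2*k) = z ^ (2*k) * of_real (trig_moment (2*k) / fact (2*k))"
      by (simp add: scaleR_conv_of_real divide_inverse ac_simps)
    also have "trig_moment (2*k) / fact (2*k) = 2*pi / (4 ^ k * fact k ^ 2)"
      by (simp add: trig_moment_def)
    also have "z ^ (2*k) * of_real (2*pi / (4 ^ k * fact k ^ 2)) = of_real (2*pi) * (z/2) ^ (2*k) / fact k ^ 2"
      by (simp add: power_divide power_mult divide_simps)
    finally show ?thesis .
  qed
  ultimately show ?thesis by simp
qed

lemma sums_bessel_I0_integral:
  "(\<lambda>k. (a/2) ^ (2*k) / fact k ^ 2) sums (integral {0..2*pi} (\<lambda>x. exp (a * cos x)) / (2*pi))"
proof -
  have "(\<lambda>k. 2*pi * ((a/2) ^ (2*k) / fact k ^ 2)) sums integral {0..2*pi} (\<lambda>x. exp (a * cos x))"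
    using sums_integral_exp_trig[of cos, OF _ _ has_integral_cos_power, where z = a]
    by (simp add: continuous_intros)
  from sums_divide[OF this, of "2*pi"] show ?thesis by simp
qed

lemma integral_exp_cos_eq_bessel_I0: "integral {0..2*pi} (\<lambda>x. exp (a * cos x)) = 2*pi * bessel_I0 a"
proof -
  have "bessel_I0 a = integral {0..2*pi} (\<lambda>x. exp (a * cos x)) / (2*pi)"
    unfolding bessel_I0_def by (rule sums_unique[symmetric, OF sums_bessel_I0_integral])
  then show ?thesis by simp
qed

lemma bessel_I0_pos: "bessel_I0 a > 0"
  unfolding bessel_I0_def
  by (rule suminf_pos2[of _ 0]) (use sums_bessel_I0_integral sums_summable in \<open>auto simp: power_mult\<close>)

lemma integral_exp_ii_sin_eq_bessel_J0:
  "integral {0..2*pi} (\<lambda>x. exp (\<i> * of_real a * of_real (sin x))) = of_real (2*pi * bessel_J0 a)"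
proof -
  define J where "J = integral {0..2*pi} (\<lambda>x. exp (\<i> * of_real a * of_real (sin x)))"
  define t where "t k = (-1) ^ k * (a/2) ^ (2*k) / fact k ^ 2" for k
  have "(\<i> * of_real a / 2) ^ (2*k) = complex_of_real ((-1) ^ k * (a/2) ^ (2*k))" for k
    by (simp add: power_mult power_mult_distrib power_divide
        power_minus[of "(complex_of_real a)\<^sup>2 / 4"])
  then have "(\<lambda>k. complex_of_real (2*pi * t k)) sums J"
    using sums_integral_exp_trig[of sin, OF _ _ has_integral_sin_power, where z = "\<i> * of_real a"]
    by (simp add: J_def t_def continuous_intros)
  then have Re: "(\<lambda>k. 2*pi * t k) sums Re J" and Im: "(\<lambda>k. 0) sums Im J"
    by (simp_all add: sums_complex_iff)
  have "bessel_J0 a = Re J / (2*pi)"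
    unfolding bessel_J0_def using sums_divide[OF Re, of "2*pi"]
    by (intro sums_unique[symmetric]) (simp add: t_def)
  moreover have "Im J = 0"
    using sums_unique2[OF Im sums_zero] by simp
  ultimately have "J = of_real (2*pi * bessel_J0 a)"
    by (simp add: complex_eq_iff)
  then show ?thesis by (simp add: J_def)
qed

lemma expectation_distributed_interval:
  fixes g :: "real \<Rightarrow> 'b::euclidean_space"
  assumes distributed: "distributed M lborel X (\<lambda>x. ennreal (indicator {l..u} x * f x))"
    and f: "continuous_on {l..u} f" "\<And>x. x \<in> {l..u} \<Longrightarrow> f x \<ge> 0"
    and g: "g \<in> borel_measurable borel" "continuous_on {l..u} g"
  shows "(LINT \<omega>|M. g (X \<omega>)) = integral {l..u} (\<lambda>x. f x *\<^sub>R g x)"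
proof -
  have X: "X \<in> measurable M lborel"
    using distributed_measurable[OF distributed] .
  have "(\<lambda>x. indicator {l..u} x *\<^sub>R f x) \<in> borel_measurable borel"
    using f(1) by (intro borel_measurable_continuous_on_indicator) auto
  then have density: "(\<lambda>x. indicator {l..u} x * f x) \<in> borel_measurable lborel"
    by simp
  have "(LINT \<omega>|M. g (X \<omega>)) = integral\<^sup>L (distr M lborel X) g"
    using X g(1) by (intro integral_distr[symmetric]) auto
  also have "\<dots> = (LINT x|lborel. (indicator {l..u} x * f x) *\<^sub>R g x)"
    unfolding distributed_distr_eq_density[OF distributed]
    using density g(1) f(2) by (intro integral_density) (auto simp: indicator_def)
  also have "\<dots> = (LINT x:{l..u}|lborel. f x *\<^sub>R g x)"
    by (simp add: set_lebesgue_integral_def)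
  also have "\<dots> = integral {l..u} (\<lambda>x. f x *\<^sub>R g x)"
    using f(1) g(2)
    by (intro set_borel_integral_eq_integral(2) borel_integrable_atLeastAtMost' continuous_intros)
  finally show ?thesis .
qed

lemma expectation_density_exp_neg_cos:
  fixes g :: "real \<Rightarrow> 'b::euclidean_space"
  assumes "distributed M lborel X
             (\<lambda>x. ennreal (indicator {0..2*pi} x * exp (- a * cos x) / (2 * pi * bessel_I0 a)))"
    and "continuous_on UNIV g"
  shows "(LINT \<omega>|M. g (X \<omega>))
           = integral {0..2*pi} (\<lambda>x. (exp (- a * cos x) / (2 * pi * bessel_I0 a)) *\<^sub>R g x)"
proof (rule expectation_distributed_interval)
  show "distributed M lborel X
          (\<lambda>x. ennreal (indicator {0..2*pi} x * (exp (- a * cos x) / (2 * pi * bessel_I0 a))))"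
    using assms(1) by simp
  show "x \<in> {0..2*pi} \<Longrightarrow> exp (- a * cos x) / (2 * pi * bessel_I0 a) \<ge> 0" for x
    using bessel_I0_pos[of a] by simp
  show "g \<in> borel_measurable borel"
    using assms(2) by (rule borel_measurable_continuous_onI)
qed (use bessel_I0_pos[of a] in \<open>auto intro!: continuous_intros continuous_on_subset[OF assms(2)]\<close>)

lemma exp_scaled_cis:
  "exp (complex_of_real a * cis x) = exp (a * cos x) *\<^sub>R exp (\<i> * of_real a * of_real (sin x))"
proof -
  have "complex_of_real a * cis x = of_real (a * cos x) + \<i> * of_real a * of_real (sin x)"
    by (simp add: complex_eq_iff)
  then show ?thesis
    by (simp add: exp_add exp_of_real[symmetric] scaleR_conv_of_real del: of_real_mult)
qed

theorem mainTheorem13: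
  fixes M :: "'w measure" and \<Phi> :: "'w \<Rightarrow> real" and a :: real
  assumes "a > 0"
    and "prob_space M"
    and "distributed M lborel \<Phi>
           (\<lambda>\<phi>. ennreal (indicator {0..2*pi} \<phi> * exp (- a * cos \<phi>) / (2 * pi * bessel_I0 a)))"
  shows "(LINT \<omega>|M. exp (complex_of_real a * cis (\<Phi> \<omega>))) = complex_of_real (bessel_J0 a / bessel_I0 a)
    \<and> (LINT \<omega>|M. (cmod (exp (complex_of_real a * cis (\<Phi> \<omega>)))) ^ 2) = 1
    \<and> (bessel_J0 a = 0 \<longrightarrow>
         (LINT \<omega>|M. exp (complex_of_real a * cis (\<Phi> \<omega>))) = 0
       \<and> (LINT \<omega>|M. (cmod (exp (complex_of_real a * cis (\<Phi> \<omega>)))) ^ 2) = 1)"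
proof -
  define K where "K = 2 * pi * bessel_I0 a"
  have cancel: "exp (- (a * cos x)) * exp (a * cos x) = 1" for x
    by (simp add: exp_minus_inverse mult.commute[of "exp (- (a * cos x))"])
  have "(LINT \<omega>|M. exp (complex_of_real a * cis (\<Phi> \<omega>)))
          = integral {0..2*pi} (\<lambda>x. (1 / K) *\<^sub>R exp (\<i> * of_real a * of_real (sin x)))"
    using expectation_density_exp_neg_cos[OF assms(3), of "\<lambda>x. exp (complex_of_real a * cis x)"]
    by (simp add: K_def[symmetric] exp_scaled_cis cancel continuous_intros)
  also have "\<dots> = complex_of_real (bessel_J0 a / bessel_I0 a)"
    using bessel_I0_pos[of a] by (simp add: integral_exp_ii_sin_eq_bessel_J0 K_def scaleR_conv_of_real)
  finally have first: "(LINT \<omega>|M. exp (complex_of_real a * cis (\<Phi> \<omega>)))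
                         = complex_of_real (bessel_J0 a / bessel_I0 a)" .
  have "(LINT \<omega>|M. (cmod (exp (complex_of_real a * cis (\<Phi> \<omega>)))) ^ 2)
          = integral {0..2*pi} (\<lambda>x. (1 / K) *\<^sub>R exp (a * cos x))"
    using expectation_density_exp_neg_cos[OF assms(3), of "\<lambda>x. (cmod (exp (complex_of_real a * cis x))) ^ 2"]
    by (simp add: K_def[symmetric] power2_eq_square mult.assoc[symmetric] cancel continuous_intros)
  also have "\<dots> = 1"
    using bessel_I0_pos[of a] by (simp add: integral_exp_cos_eq_bessel_I0 K_def)
  finally show ?thesis using first by simp
qed

end
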